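(* Let $I=[a,b]$ be an interval with $|I|<1$, $\gamma>1$, and let $\mathcal{K}:I\to\mathbb{R}$ be continuous and such that there is $C_0>0$ with $|\mathcal{K}(\xi+\tau)+\mathcal{K}(\xi-\tau)-2\mathcal{K}(\xi)|\le C_0\tau\mathcal{Z}_\gamma(\tau)$ for all $\tau\in[0,|I|/2]$ and all $\xi$ with $\xi\pm\tau\in I$. Then $\mathcal{K}\in C^1(I)$, and there exists a constant $C>0$ such that for all $\xi,\eta\in I$, $$|\mathcal{K}'(\xi)-\mathcal{K}'(\eta)|\le C\,\mathcal{P}_\gamma(|\xi-\eta|).$$
   Context: $\mathcal{Z}_\gamma(x)=(\log\frac1x)^{-\gamma}$ for $x\in(0,1)$ and $\mathcal{Z}_\gamma(0)=0$. For $\gamma>1$, $\mathcal{P}_\gamma:(0,1)\to\mathbb{R}$ is $\mathcal{P}_\gamma(x)=\sum_{n=1}^\infty \mathcal{Z}_\gamma(x2^{-n})$, extended by $\mathcal{P}_\gamma(0)=0$. *)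

theory Defs
  imports "HOL-Analysis.Analysis"
begin

definition Zg :: "real \<Rightarrow> real \<Rightarrow> real" where
  "Zg \<gamma> x = (if x = 0 then 0 else (ln (1 / x)) powr (- \<gamma>))"

definition Pg :: "real \<Rightarrow> real \<Rightarrow> real" where
  "Pg \<gamma> x = (if x = 0 then 0 else (\<Sum>n. Zg \<gamma> (x / 2 ^ (Suc n))))"

end

theory Submission
  imports Defs
begin

text \<open>Halving the step of a difference quotient changes it by a second difference:
  \<open>|q(x, t) - q(x, 2t)| \<le> C\<^sub>0/2 \<cdot> Z\<^sub>\<gamma>(|t|)\<close> for \<open>q(x, h) = (K(x+h) - K x)/h\<close>.
  Telescoping over \<open>h, h/2, h/4, \<dots>\<close> bounds the total change by \<open>C\<^sub>0/2 \<cdot> P\<^sub>\<gamma>(|h|)\<close>,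
  which tends to 0 with \<open>h\<close> because \<open>\<Sum>\<^sub>n (n log 2)\<^sup>-\<^sup>\<gamma>\<close> converges.
  Hence on \<open>[a, b - \<delta>]\<close> the quotients \<open>q(x, \<delta> 2\<^sup>-\<^sup>n)\<close> converge uniformly to a
  continuous \<open>G\<close>, and summing the quotients along finer and finer grids shows that
  \<open>G\<close> is the derivative of \<open>K\<close>; the reflection \<open>x \<mapsto> -x\<close> covers the right end point.
  Finally \<open>K'(\<xi>)\<close> and \<open>K'(\<eta>)\<close> both differ from the slope of the chord between
  \<open>\<xi>\<close> and \<open>\<eta>\<close> by at most \<open>C\<^sub>0/2 \<cdot> P\<^sub>\<gamma>(|\<xi> - \<eta>|)\<close>.\<close>

lemma Zg_nonneg: "0 \<le> Zg g x"
  by (simp add: Zg_def)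

lemma tendsto_Zg_at_right_0:
  assumes "0 < g"
  shows "(Zg g \<longlongrightarrow> 0) (at_right 0)"
proof -
  have "filterlim (\<lambda>x. - ln x) at_top (at_right (0::real))"
    by (simp add: filterlim_uminus_at_top ln_at_0)
  then have "filterlim (\<lambda>x. ln (1 / x)) at_top (at_right (0::real))"
    by (rule filterlim_cong[THEN iffD1, rotated 3])
       (auto simp: eventually_at_right_field ln_div intro!: exI[of _ 1])
  then have "((\<lambda>x. ln (1 / x) powr - g) \<longlongrightarrow> 0) (at_right 0)"
    by (rule tendsto_neg_powr[rotated]) (use assms in simp)
  then show ?thesis
    by (rule tendsto_cong[THEN iffD1, rotated])
       (auto simp: Zg_def eventually_at_right_field intro!: exI[of _ 1])
qed

lemma Zg_dyadic_le:
  assumes "0 < g" "0 \<le> h" "h < 1"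
  shows "Zg g (h / 2 ^ Suc n) \<le> (real (Suc n) * ln 2) powr - g"
proof (cases "h = 0")
  case True
  then show ?thesis by (simp add: Zg_def)
next
  case False
  then have "0 < h" using assms by simp
  then have "ln (1 / (h / 2 ^ Suc n)) = real (Suc n) * ln 2 + ln (1 / h)"
    by (simp add: ln_div ln_mult ln_realpow algebra_simps)
  moreover have "0 \<le> ln (1 / h)" using \<open>0 < h\<close> assms by simp
  ultimately have "(real (Suc n) * ln 2) \<le> ln (1 / (h / 2 ^ Suc n))" by simp
  then show ?thesis
    using \<open>0 < h\<close> assms by (simp add: Zg_def powr_mono2')
qed

lemma summable_dyadic_majorant:
  assumes "1 < g"
  shows "summable (\<lambda>n. (real (Suc n) * ln 2) powr - g)"
proof -
  have "summable (\<lambda>n. real (Suc n) powr - g)"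
    using assms summable_Suc_iff[of "\<lambda>n. real n powr - g"] by (simp add: summable_real_powr_iff)
  then have "summable (\<lambda>n. ln 2 powr - g * real (Suc n) powr - g)"
    by (rule summable_mult)
  then show ?thesis by (simp add: powr_mult mult.commute)
qed

lemma summable_Zg_dyadic:
  assumes "1 < g" "0 \<le> h" "h < 1"
  shows "summable (\<lambda>n. Zg g (h / 2 ^ Suc n))"
  by (rule summable_comparison_test'[OF summable_dyadic_majorant[OF assms(1)]])
     (use Zg_dyadic_le[of g h] assms Zg_nonneg in auto)

lemma sum_Zg_dyadic_le_Pg:
  assumes "1 < g" "0 < h" "h < 1"
  shows "(\<Sum>k<n. Zg g (h / 2 ^ Suc k)) \<le> Pg g h"
  unfolding Pg_def using assms summable_Zg_dyadic[of g h] Zg_nonneg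
  by (auto intro!: sum_le_suminf)

lemma tendsto_Pg_at_right_0:
  assumes "1 < g"
  shows "(Pg g \<longlongrightarrow> 0) (at_right 0)"
proof -
  have sums: "uniform_limit {0<..<1} (\<lambda>N h. \<Sum>k<N. Zg g (h / 2 ^ Suc k))
                (\<lambda>h. \<Sum>k. Zg g (h / 2 ^ Suc k)) sequentially"
    by (rule Weierstrass_m_test[OF _ summable_dyadic_majorant[OF assms]])
       (use Zg_dyadic_le[of g] assms Zg_nonneg in auto)
  have terms: "((\<lambda>h. Zg g (h / 2 ^ Suc k)) \<longlongrightarrow> 0) (at 0 within {0<..<1})" for k
  proof -
    have "filterlim (\<lambda>h::real. h / 2 ^ Suc k) (at_right 0) (at_right 0)"
      by (rule tendsto_imp_filterlim_at_right)
         (auto intro!: tendsto_eq_intros simp: eventually_at_right_field intro: exI[of _ 1])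
    with assms have "((\<lambda>h. Zg g (h / 2 ^ Suc k)) \<longlongrightarrow> 0) (at_right 0)"
      by (intro filterlim_compose[OF tendsto_Zg_at_right_0]) auto
    then show ?thesis
      by (rule tendsto_within_subset) auto
  qed
  have "((\<lambda>h. \<Sum>k. Zg g (h / 2 ^ Suc k)) \<longlongrightarrow> 0) (at 0 within {0<..<1})"
    by (rule swap_uniform_limit[OF _ _ sums])
       (auto intro!: always_eventually allI tendsto_null_sum terms simp del: power_Suc)
  moreover have "at (0::real) within {0<..<1} = at_right 0"
    by (rule at_within_nhd[of _ "{..<1}"]) auto
  ultimately have "((\<lambda>h. \<Sum>k. Zg g (h / 2 ^ Suc k)) \<longlongrightarrow> 0) (at_right 0)"
    by simp
  then show ?thesis
    by (rule tendsto_cong[THEN iffD1, rotated]) (simp add: Pg_def eventually_at_filter)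
qed

lemma continuous_on_Pg_modulus:
  fixes f :: "real \<Rightarrow> real"
  assumes "1 < g" and modulus: "\<And>x y. x \<in> S \<Longrightarrow> y \<in> S \<Longrightarrow> \<bar>f x - f y\<bar> \<le> C * Pg g \<bar>x - y\<bar>"
  shows "continuous_on S f"
  unfolding continuous_on_def
proof
  fix x
  assume "x \<in> S"
  have "filterlim (\<lambda>y. \<bar>y - x\<bar>) (at_right 0) (at x within S)"
    by (rule tendsto_imp_filterlim_at_right)
       (auto intro!: tendsto_eq_intros simp: eventually_at_filter)
  from filterlim_compose[OF tendsto_Pg_at_right_0[OF \<open>1 < g\<close>] this]
  have "((\<lambda>y. C * Pg g \<bar>y - x\<bar>) \<longlongrightarrow> 0) (at x within S)"
    by (rule tendsto_mult_right_zero)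
  moreover have "\<forall>\<^sub>F y in at x within S. norm (f y - f x) \<le> C * Pg g \<bar>y - x\<bar>"
    unfolding eventually_at_filter
    by (intro always_eventually allI impI) (simp add: modulus \<open>x \<in> S\<close>)
  ultimately have "((\<lambda>y. f y - f x) \<longlongrightarrow> 0) (at x within S)"
    by (rule Lim_null_comparison[rotated])
  then show "(f \<longlongrightarrow> f x) (at x within S)"
    by (rule Lim_null[THEN iffD2])
qed

definition diff_quot :: "(real \<Rightarrow> real) \<Rightarrow> real \<Rightarrow> real \<Rightarrow> real" where
  "diff_quot f x h = (f (x + h) - f x) / h"

lemma add_scaled_mem_Icc:
  fixes x h c :: real
  assumes "x \<in> {a..b}" "x + h \<in> {a..b}" "0 \<le> c" "c \<le> 1"
  shows "x + c * h \<in> {a..b}"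
proof (cases "0 \<le> h")
  case True
  then have "0 \<le> c * h" "c * h \<le> h" using assms by (auto simp: mult_left_le_one_le)
  then show ?thesis using assms by auto
next
  case False
  then have "c * h \<le> 0" "h \<le> c * h" using assms by (auto simp: mult_nonneg_nonpos mult_left_le_one_le)
  then show ?thesis using assms by auto
qed

lemma grid_secant_bound:
  fixes K :: "real \<Rightarrow> real"
  assumes "0 < t" and quot: "\<forall>u\<in>{x..y}. \<bar>diff_quot K u t - c\<bar> \<le> \<epsilon>"
  shows "x + real m * t \<le> y \<Longrightarrow> \<bar>K (x + real m * t) - K x - real m * t * c\<bar> \<le> real m * t * \<epsilon>"
proof (induction m)
  case 0
  then show ?case by simp
next
  case (Suc m)
  let ?u = "x + real m * t"
  have "?u \<le> y" using Suc.prems \<open>0 < t\<close> by (simp add: distrib_right)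
  then have "?u \<in> {x..y}" using \<open>0 < t\<close> by auto
  then have "\<bar>diff_quot K ?u t - c\<bar> \<le> \<epsilon>" using quot by blast
  moreover have "K (?u + t) - K ?u - t * c = t * (diff_quot K ?u t - c)"
    using \<open>0 < t\<close> by (simp add: diff_quot_def field_simps)
  ultimately have "\<bar>K (?u + t) - K ?u - t * c\<bar> \<le> t * \<epsilon>"
    using \<open>0 < t\<close> by (simp add: abs_mult mult_left_mono)
  moreover have "\<bar>K ?u - K x - real m * t * c\<bar> \<le> real m * t * \<epsilon>"
    using Suc.IH \<open>?u \<le> y\<close> .
  ultimately show ?case by (simp add: algebra_simps abs_le_iff)
qed

lemma grid_point_below:
  fixes t :: real
  assumes "0 < t" "x \<le> y"
  obtains m :: nat where "x + real m * t \<le> y" "y < x + real m * t + t"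
proof
  let ?m = "nat \<lfloor>(y - x) / t\<rfloor>"
  have "real ?m \<le> (y - x) / t" "(y - x) / t < real ?m + 1"
    using assms by (auto simp: of_nat_nat)
  then show "x + real ?m * t \<le> y" "y < x + real ?m * t + t"
    using assms(1) by (auto simp: field_simps)
qed

lemma secant_bound_from_quotients:
  fixes K :: "real \<Rightarrow> real"
  assumes cont: "continuous_on {x..y} K" and "x \<le> y"
    and t: "\<And>n. 0 < t n" "t \<longlonglongrightarrow> 0"
    and quot: "\<forall>\<^sub>F n in sequentially. \<forall>u\<in>{x..y}. \<bar>diff_quot K u (t n) - c\<bar> \<le> \<epsilon>"
  shows "\<bar>K y - K x - (y - x) * c\<bar> \<le> (y - x) * \<epsilon>"
proof -
  obtain N where N: "\<And>n. N \<le> n \<Longrightarrow> \<forall>u\<in>{x..y}. \<bar>diff_quot K u (t n) - c\<bar> \<le> \<epsilon>"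
    using quot by (auto simp: eventually_sequentially)
  have "0 \<le> \<epsilon>"
    using N[of N] \<open>x \<le> y\<close> by (meson abs_ge_zero atLeastAtMost_iff order_refl order_trans)
  have "\<forall>n. \<exists>m::nat. x + real m * t n \<le> y \<and> y < x + real m * t n + t n"
    using grid_point_below[OF t(1) \<open>x \<le> y\<close>] by metis
  then obtain m where m: "\<And>n. x + real (m n) * t n \<le> y" "\<And>n. y < x + real (m n) * t n + t n"
    by metis
  define z where "z n = x + real (m n) * t n" for n
  have z: "z n \<in> {x..y}" "y - z n \<le> t n" for n
    using m[of n] t(1)[of n] by (auto simp: z_def)
  then have "(\<lambda>n. y - z n) \<longlonglongrightarrow> 0"
    by (intro tendsto_sandwich[OF _ _ tendsto_const t(2)] always_eventually allI) auto
  from tendsto_diff[OF tendsto_const[of y] this] have "z \<longlonglongrightarrow> y"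
    by simp
  then have "(\<lambda>n. \<bar>K (z n) - K x - (z n - x) * c\<bar>) \<longlonglongrightarrow> \<bar>K y - K x - (y - x) * c\<bar>"
    by (intro tendsto_intros continuous_on_tendsto_compose[OF cont]) (use z \<open>x \<le> y\<close> in auto)
  moreover have "\<bar>K (z n) - K x - (z n - x) * c\<bar> \<le> (y - x) * \<epsilon>" if "N \<le> n" for n
  proof -
    from grid_secant_bound[OF t(1) N[OF that] m(1)]
    have "\<bar>K (z n) - K x - (z n - x) * c\<bar> \<le> (z n - x) * \<epsilon>"
      by (simp add: z_def algebra_simps)
    also have "\<dots> \<le> (y - x) * \<epsilon>"
      using z(1)[of n] \<open>0 \<le> \<epsilon>\<close> by (intro mult_right_mono) auto
    finally show ?thesis .
  qed
  ultimately show ?thesis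
    by (intro Lim_bounded[of _ _ N]) auto
qed

lemma chord_slope_near_uniform_limit:
  fixes K G :: "real \<Rightarrow> real"
  assumes cont: "continuous_on {\<alpha>..\<beta>} K"
    and t: "\<And>n. 0 < t n" "t \<longlonglongrightarrow> 0"
    and lim: "uniform_limit {\<alpha>..\<beta>} (\<lambda>n u. diff_quot K u (t n)) G sequentially"
    and pq: "p \<in> {\<alpha>..\<beta>}" "q \<in> {\<alpha>..\<beta>}" "p \<le> q"
    and G_close: "\<And>u. u \<in> {p..q} \<Longrightarrow> \<bar>G u - c\<bar> < e / 2"
  shows "\<bar>K q - K p - (q - p) * c\<bar> \<le> (q - p) * e"
proof (rule secant_bound_from_quotients[OF _ \<open>p \<le> q\<close> t])
  show "continuous_on {p..q} K"
    by (rule continuous_on_subset[OF cont]) (use pq in auto)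
  have "\<bar>G p - c\<bar> < e / 2"
    using G_close \<open>p \<le> q\<close> by auto
  then have "0 < e"
    using abs_ge_zero[of "G p - c"] by linarith
  then have near: "\<forall>\<^sub>F n in sequentially. \<forall>u\<in>{\<alpha>..\<beta>}. \<bar>diff_quot K u (t n) - G u\<bar> < e / 2"
    using uniform_limitD[OF lim, of "e / 2"] by (simp add: dist_real_def)
  show "\<forall>\<^sub>F n in sequentially. \<forall>u\<in>{p..q}. \<bar>diff_quot K u (t n) - c\<bar> \<le> e"
  proof (rule eventually_mono[OF near], intro ballI)
    fix n u
    assume "\<forall>u\<in>{\<alpha>..\<beta>}. \<bar>diff_quot K u (t n) - G u\<bar> < e / 2" and u: "u \<in> {p..q}"
    moreover have "u \<in> {\<alpha>..\<beta>}" using u pq by auto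
    ultimately have "\<bar>diff_quot K u (t n) - G u\<bar> < e / 2" by blast
    with G_close[OF u] show "\<bar>diff_quot K u (t n) - c\<bar> \<le> e" by arith
  qed
qed

lemma has_real_derivative_from_uniform_quotients:
  fixes K G :: "real \<Rightarrow> real"
  assumes cont: "continuous_on {\<alpha>..\<beta>} K" and "continuous_on {\<alpha>..\<beta>} G"
    and t: "\<And>n. 0 < t n" "t \<longlonglongrightarrow> 0"
    and lim: "uniform_limit {\<alpha>..\<beta>} (\<lambda>n u. diff_quot K u (t n)) G sequentially"
    and z: "z \<in> {\<alpha>..\<beta>}"
  shows "(K has_real_derivative G z) (at z within {\<alpha>..\<beta>})"
  unfolding has_field_derivative_iff
proof (rule Lim_withinI)
  fix e :: real
  assume "0 < e"
  then obtain d where "0 < d"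
    and d: "\<And>u. u \<in> {\<alpha>..\<beta>} \<Longrightarrow> \<bar>u - z\<bar> < d \<Longrightarrow> \<bar>G u - G z\<bar> < e / 2"
    using \<open>continuous_on {\<alpha>..\<beta>} G\<close> z unfolding continuous_on_iff dist_real_def
    by (metis half_gt_zero)
  have chord: "\<bar>K q - K p - (q - p) * G z\<bar> \<le> (q - p) * e"
    if "p \<in> {\<alpha>..\<beta>}" "q \<in> {\<alpha>..\<beta>}" "p \<le> q" "\<bar>p - z\<bar> < d" "\<bar>q - z\<bar> < d" for p q
    by (rule chord_slope_near_uniform_limit[OF cont t lim that(1-3)]) (use d that in auto)
  show "\<exists>d>0. \<forall>y\<in>{\<alpha>..\<beta>}. 0 < dist y z \<and> dist y z < d \<longrightarrow>
          dist ((K y - K z) / (y - z)) (G z) \<le> e"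
  proof (intro exI conjI ballI impI)
    fix y
    assume y: "y \<in> {\<alpha>..\<beta>}" "0 < dist y z \<and> dist y z < d"
    have "\<bar>K y - K z - (y - z) * G z\<bar> \<le> \<bar>y - z\<bar> * e"
      using chord[of z y] chord[of y z] y z \<open>0 < d\<close>
      by (cases "z \<le> y") (auto simp: dist_real_def abs_minus_commute algebra_simps)
    moreover have "(K y - K z) / (y - z) - G z = (K y - K z - (y - z) * G z) / (y - z)"
      using y by (simp add: field_simps)
    ultimately show "dist ((K y - K z) / (y - z)) (G z) \<le> e"
      using y by (simp add: dist_real_def abs_divide divide_le_eq mult.commute)
  qed (rule \<open>0 < d\<close>)
qed

text \<open>The restriction \<open>\<tau> \<le> (b - a) / 2\<close> of the theorem is implied by
  \<open>\<xi> \<plusminus> \<tau> \<in> {a..b}\<close> and is therefore omitted.\<close>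

locale zygmund_second_difference =
  fixes a b g C0 :: real and K :: "real \<Rightarrow> real"
  assumes short: "b - a < 1" and exponent: "1 < g" and C0_nonneg: "0 \<le> C0"
    and continuous: "continuous_on {a..b} K"
    and second_difference: "\<And>\<xi> \<tau>. 0 \<le> \<tau> \<Longrightarrow> \<xi> - \<tau> \<in> {a..b} \<Longrightarrow> \<xi> + \<tau> \<in> {a..b} \<Longrightarrow>
          \<bar>K (\<xi> + \<tau>) + K (\<xi> - \<tau>) - 2 * K \<xi>\<bar> \<le> C0 * \<tau> * Zg g \<tau>"
begin

lemma second_difference_abs:
  assumes "x \<in> {a..b}" "x + 2 * t \<in> {a..b}"
  shows "\<bar>K (x + 2 * t) + K x - 2 * K (x + t)\<bar> \<le> C0 * \<bar>t\<bar> * Zg g \<bar>t\<bar>"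
proof (cases "0 \<le> t")
  case True
  have "x + t + t = x + 2 * t" "x + t - t = x" by simp_all
  with second_difference[of t "x + t"] True assms show ?thesis
    by simp
next
  case False
  have "x + t - - t = x + 2 * t" "x + t + - t = x" by simp_all
  with second_difference[of "- t" "x + t"] False assms show ?thesis
    by (simp add: add.commute)
qed

lemma quotient_halving_bound:
  assumes "x \<in> {a..b}" "x + 2 * t \<in> {a..b}" "t \<noteq> 0"
  shows "\<bar>diff_quot K x t - diff_quot K x (2 * t)\<bar> \<le> C0 / 2 * Zg g \<bar>t\<bar>"
proof -
  have "diff_quot K x t - diff_quot K x (2 * t) = - (K (x + 2 * t) + K x - 2 * K (x + t)) / (2 * t)"
    using assms(3) by (simp add: diff_quot_def field_simps)
  then have "\<bar>diff_quot K x t - diff_quot K x (2 * t)\<bar>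
      = \<bar>K (x + 2 * t) + K x - 2 * K (x + t)\<bar> / (2 * \<bar>t\<bar>)"
    by (simp only: abs_divide abs_mult abs_minus_cancel abs_numeral)
  also have "\<dots> \<le> C0 * \<bar>t\<bar> * Zg g \<bar>t\<bar> / (2 * \<bar>t\<bar>)"
    using second_difference_abs[OF assms(1,2)] by (intro divide_right_mono) auto
  also have "\<dots> = C0 / 2 * Zg g \<bar>t\<bar>"
    using assms(3) by simp
  finally show ?thesis .
qed

lemma dyadic_quotient_telescope:
  assumes x: "x \<in> {a..b}" "x + h \<in> {a..b}" and "h \<noteq> 0"
  shows "\<bar>diff_quot K x (h / 2 ^ n) - diff_quot K x h\<bar> \<le> C0 / 2 * (\<Sum>k<n. Zg g (\<bar>h\<bar> / 2 ^ Suc k))"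
proof (induction n)
  case 0
  then show ?case by simp
next
  case (Suc n)
  define t where "t = h / 2 ^ Suc n"
  have double: "2 * t = h / 2 ^ n" and abs_t: "\<bar>t\<bar> = \<bar>h\<bar> / 2 ^ Suc n"
    by (simp_all add: t_def abs_divide)
  have "x + 2 * t \<in> {a..b}"
    using add_scaled_mem_Icc[OF x, of "1 / 2 ^ n"] by (simp add: double)
  moreover have "t \<noteq> 0" using \<open>h \<noteq> 0\<close> by (simp add: t_def)
  ultimately have "\<bar>diff_quot K x t - diff_quot K x (2 * t)\<bar> \<le> C0 / 2 * Zg g \<bar>t\<bar>"
    by (rule quotient_halving_bound[OF x(1)])
  then have "\<bar>diff_quot K x t - diff_quot K x (h / 2 ^ n)\<bar> \<le> C0 / 2 * Zg g (\<bar>h\<bar> / 2 ^ Suc n)"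
    unfolding double abs_t .
  moreover have "\<bar>diff_quot K x t - diff_quot K x h\<bar>
      \<le> \<bar>diff_quot K x t - diff_quot K x (h / 2 ^ n)\<bar> + \<bar>diff_quot K x (h / 2 ^ n) - diff_quot K x h\<bar>"
    using dist_triangle[of "diff_quot K x t"] by (simp add: dist_real_def)
  ultimately have "\<bar>diff_quot K x (h / 2 ^ Suc n) - diff_quot K x h\<bar>
      \<le> C0 / 2 * Zg g (\<bar>h\<bar> / 2 ^ Suc n) + C0 / 2 * (\<Sum>k<n. Zg g (\<bar>h\<bar> / 2 ^ Suc k))"
    using Suc.IH unfolding t_def by linarith
  moreover have "C0 / 2 * (\<Sum>k<Suc n. Zg g (\<bar>h\<bar> / 2 ^ Suc k))
      = C0 / 2 * Zg g (\<bar>h\<bar> / 2 ^ Suc n) + C0 / 2 * (\<Sum>k<n. Zg g (\<bar>h\<bar> / 2 ^ Suc k))"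
    by (simp add: distrib_left del: power_Suc)
  ultimately show ?case
    by linarith
qed

lemma dyadic_quotient_Pg_bound:
  assumes "x \<in> {a..b}" "x + h \<in> {a..b}" "h \<noteq> 0"
  shows "\<bar>diff_quot K x (h / 2 ^ n) - diff_quot K x h\<bar> \<le> C0 / 2 * Pg g \<bar>h\<bar>"
proof -
  have "\<bar>h\<bar> < 1" using assms(1,2) short by auto
  then have "(\<Sum>k<n. Zg g (\<bar>h\<bar> / 2 ^ Suc k)) \<le> Pg g \<bar>h\<bar>"
    using assms(3) exponent by (intro sum_Zg_dyadic_le_Pg) auto
  then have "C0 / 2 * (\<Sum>k<n. Zg g (\<bar>h\<bar> / 2 ^ Suc k)) \<le> C0 / 2 * Pg g \<bar>h\<bar>"
    using C0_nonneg by (intro mult_left_mono) auto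
  with dyadic_quotient_telescope[OF assms] show ?thesis
    by (rule order_trans)
qed

lemma derivative_quotient_bound:
  assumes D: "(K has_real_derivative D) (at x within {a..b})"
    and x: "x \<in> {a..b}" "x + h \<in> {a..b}" and "h \<noteq> 0"
  shows "\<bar>D - diff_quot K x h\<bar> \<le> C0 / 2 * Pg g \<bar>h\<bar>"
proof -
  have "filterlim (\<lambda>n. x + h / 2 ^ n) (at x within {a..b}) sequentially"
  proof (rule filterlim_at_withinI)
    show "(\<lambda>n. x + h / 2 ^ n) \<longlonglongrightarrow> x"
      using tendsto_add[OF tendsto_const LIMSEQ_divide_realpow_zero[of 2 h]] by simp
    have "x + h / 2 ^ n \<in> {a..b}" for n
      using add_scaled_mem_Icc[OF x, of "1 / 2 ^ n"] by simp
    then show "\<forall>\<^sub>F n in sequentially. x + h / 2 ^ n \<in> {a..b} - {x}"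
      using \<open>h \<noteq> 0\<close> by (auto intro!: always_eventually)
  qed
  from filterlim_compose[OF D[unfolded has_field_derivative_iff] this]
  have "(\<lambda>n. diff_quot K x (h / 2 ^ n)) \<longlonglongrightarrow> D"
    by (simp add: diff_quot_def)
  then have "(\<lambda>n. \<bar>diff_quot K x (h / 2 ^ n) - diff_quot K x h\<bar>) \<longlonglongrightarrow> \<bar>D - diff_quot K x h\<bar>"
    by (intro tendsto_intros)
  moreover have "\<forall>n\<ge>0. \<bar>diff_quot K x (h / 2 ^ n) - diff_quot K x h\<bar> \<le> C0 / 2 * Pg g \<bar>h\<bar>"
    using dyadic_quotient_Pg_bound[OF x \<open>h \<noteq> 0\<close>] by blast
  ultimately show ?thesis
    by (rule Lim_bounded)
qed

lemma dyadic_quotient_Cauchy_bound: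
  assumes "0 < \<delta>" "u \<in> {a..b - \<delta>}" "n \<le> m"
  shows "\<bar>diff_quot K u (\<delta> / 2 ^ m) - diff_quot K u (\<delta> / 2 ^ n)\<bar> \<le> C0 / 2 * Pg g (\<delta> / 2 ^ n)"
proof -
  have "0 < \<delta> / 2 ^ n" "\<delta> / 2 ^ n \<le> \<delta>"
    using assms(1) by (simp_all add: divide_le_eq)
  moreover have "a \<le> u" "u \<le> b - \<delta>"
    using assms(2) by auto
  ultimately have "u \<in> {a..b}" "u + \<delta> / 2 ^ n \<in> {a..b}"
    unfolding atLeastAtMost_iff by linarith+
  from dyadic_quotient_Pg_bound[OF this, of "m - n"] assms show ?thesis
    by (simp add: power_add[symmetric])
qed

lemma dyadic_quotients_uniformly_convergent:
  assumes "0 < \<delta>"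
  shows "uniformly_convergent_on {a..b - \<delta>} (\<lambda>n u. diff_quot K u (\<delta> / 2 ^ n))"
proof (intro Cauchy_uniformly_convergent uniformly_Cauchy_onI)
  fix e :: real
  assume "0 < e"
  have "filterlim (\<lambda>n. \<delta> / 2 ^ n) (at_right 0) sequentially"
    using assms by (intro tendsto_imp_filterlim_at_right LIMSEQ_divide_realpow_zero) auto
  from filterlim_compose[OF tendsto_Pg_at_right_0[OF exponent] this]
  have "(\<lambda>n. C0 / 2 * Pg g (\<delta> / 2 ^ n)) \<longlonglongrightarrow> 0"
    by (rule tendsto_mult_right_zero)
  from LIMSEQ_D[OF this, of "e / 2"] \<open>0 < e\<close> obtain M
    where "\<forall>n\<ge>M. norm (C0 / 2 * Pg g (\<delta> / 2 ^ n) - 0) < e / 2"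
    by auto
  then have M: "C0 / 2 * Pg g (\<delta> / 2 ^ M) < e / 2"
    by auto
  have "dist (diff_quot K u (\<delta> / 2 ^ m)) (diff_quot K u (\<delta> / 2 ^ n)) < e"
    if "u \<in> {a..b - \<delta>}" "M \<le> m" "M \<le> n" for u m n
    using dyadic_quotient_Cauchy_bound[OF assms that(1,2)]
      dyadic_quotient_Cauchy_bound[OF assms that(1,3)] M
      dist_triangle2[of "diff_quot K u (\<delta> / 2 ^ m)" "diff_quot K u (\<delta> / 2 ^ n)"
        "diff_quot K u (\<delta> / 2 ^ M)"]
    by (simp add: dist_real_def)
  then show "\<exists>M. \<forall>u\<in>{a..b - \<delta>}. \<forall>m\<ge>M. \<forall>n\<ge>M.
      dist (diff_quot K u (\<delta> / 2 ^ m)) (diff_quot K u (\<delta> / 2 ^ n)) < e"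
    by blast
qed

lemma exists_derivative_below_right_end:
  assumes "z \<in> {a..<b}"
  shows "\<exists>D. (K has_real_derivative D) (at z within {a..b})"
proof -
  define \<delta> where "\<delta> = (b - z) / 2"
  have "0 < \<delta>" "z < b - \<delta>"
    using assms by (simp_all add: \<delta>_def field_simps)
  then obtain G where G: "uniform_limit {a..b - \<delta>} (\<lambda>n u. diff_quot K u (\<delta> / 2 ^ n)) G sequentially"
    using dyadic_quotients_uniformly_convergent unfolding uniformly_convergent_on_def by blast
  have "continuous_on {a..b - \<delta>} (\<lambda>u. diff_quot K u (\<delta> / 2 ^ n))" for n
  proof -
    have "\<delta> / 2 ^ n \<le> \<delta>"
      using \<open>0 < \<delta>\<close> by (simp add: divide_le_eq)
    then have "continuous_on {a..b - \<delta>} (\<lambda>u. K (u + \<delta> / 2 ^ n))"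
      using \<open>0 < \<delta>\<close> by (intro continuous_on_compose2[OF continuous] continuous_intros) auto
    moreover have "continuous_on {a..b - \<delta>} K"
      by (rule continuous_on_subset[OF continuous]) (use \<open>0 < \<delta>\<close> in auto)
    ultimately show ?thesis
      unfolding diff_quot_def using \<open>0 < \<delta>\<close> by (intro continuous_intros) auto
  qed
  then have "continuous_on {a..b - \<delta>} G"
    by (intro uniform_limit_theorem[OF _ G] always_eventually allI) auto
  then have "(K has_real_derivative G z) (at z within {a..b - \<delta>})"
    using \<open>0 < \<delta>\<close> \<open>z < b - \<delta>\<close> assms
    by (intro has_real_derivative_from_uniform_quotients[OF _ _ _ _ G]
          continuous_on_subset[OF continuous] LIMSEQ_divide_realpow_zero) auto
  moreover have "at z within {a..b - \<delta>} = at z within {a..b}"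
    by (rule at_within_nhd[of _ "{..<b - \<delta>}"]) (use \<open>0 < \<delta>\<close> \<open>z < b - \<delta>\<close> in auto)
  ultimately show ?thesis
    by auto
qed

lemma reflection: "zygmund_second_difference (- b) (- a) g C0 (\<lambda>y. K (- y))"
proof
  show "continuous_on {- b..- a} (\<lambda>y. K (- y))"
    by (intro continuous_on_compose2[OF continuous] continuous_intros) auto
  show "\<bar>K (- (\<xi> + \<tau>)) + K (- (\<xi> - \<tau>)) - 2 * K (- \<xi>)\<bar> \<le> C0 * \<tau> * Zg g \<tau>"
    if "0 \<le> \<tau>" "\<xi> - \<tau> \<in> {- b..- a}" "\<xi> + \<tau> \<in> {- b..- a}" for \<xi> \<tau>
  proof -
    have "- \<xi> + \<tau> = - (\<xi> - \<tau>)" "- \<xi> - \<tau> = - (\<xi> + \<tau>)"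
      by simp_all
    with second_difference[of \<tau> "- \<xi>"] that show ?thesis
      by (simp add: add.commute)
  qed
qed (use short exponent C0_nonneg in auto)

lemma exists_derivative:
  assumes "a < b" "x \<in> {a..b}"
  shows "\<exists>D. (K has_real_derivative D) (at x within {a..b})"
proof (cases "x < b")
  case True
  with assms show ?thesis
    by (intro exists_derivative_below_right_end) auto
next
  case False
  with assms have "- x \<in> {- b..<- a}"
    by auto
  then obtain D where "((\<lambda>y. K (- y)) has_real_derivative D) (at (- x) within {- b..- a})"
    using zygmund_second_difference.exists_derivative_below_right_end[OF reflection] by blast
  moreover have "uminus ` {a..b} = {- b..- a}"
    by simp
  ultimately have "((\<lambda>y. K (- y)) \<circ> uminus has_real_derivative D * - 1) (at x within {a..b})"
    by (intro DERIV_image_chain) (auto intro!: derivative_eq_intros)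
  then show ?thesis
    by (auto simp: comp_def)
qed

lemma derivative_modulus:
  assumes K': "\<And>x. x \<in> {a..b} \<Longrightarrow> (K has_real_derivative K' x) (at x within {a..b})"
    and "\<xi> \<in> {a..b}" "\<eta> \<in> {a..b}"
  shows "\<bar>K' \<xi> - K' \<eta>\<bar> \<le> C0 * Pg g \<bar>\<xi> - \<eta>\<bar>"
proof (cases "\<xi> = \<eta>")
  case True
  then show ?thesis by (simp add: Pg_def)
next
  case False
  define h where "h = \<eta> - \<xi>"
  have "h \<noteq> 0" "\<xi> + h \<in> {a..b}" "\<eta> + - h \<in> {a..b}"
    using False assms by (auto simp: h_def)
  have "diff_quot K \<eta> (- h) = diff_quot K \<xi> h"
    by (simp add: diff_quot_def h_def) (metis minus_diff_eq minus_divide_divide)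
  then have bound_\<eta>: "\<bar>K' \<eta> - diff_quot K \<xi> h\<bar> \<le> C0 / 2 * Pg g \<bar>h\<bar>"
    using derivative_quotient_bound[OF K'[OF \<open>\<eta> \<in> {a..b}\<close>] \<open>\<eta> \<in> {a..b}\<close> \<open>\<eta> + - h \<in> {a..b}\<close>]
      \<open>h \<noteq> 0\<close> by simp
  have bound_\<xi>: "\<bar>K' \<xi> - diff_quot K \<xi> h\<bar> \<le> C0 / 2 * Pg g \<bar>h\<bar>"
    by (rule derivative_quotient_bound[OF K'[OF \<open>\<xi> \<in> {a..b}\<close>] \<open>\<xi> \<in> {a..b}\<close>]) fact+
  have abs_h: "\<bar>h\<bar> = \<bar>\<xi> - \<eta>\<bar>"
    by (simp add: h_def)
  show ?thesis
    using bound_\<xi> bound_\<eta> unfolding abs_h by arith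
qed

end

theorem theorem2p3:
  fixes a b \<gamma> :: real and K :: "real \<Rightarrow> real"
  assumes "a < b" and "b - a < 1" and "\<gamma> > 1"
    and "continuous_on {a..b} K"
    and "\<exists>C0>0. \<forall>\<xi> \<tau>. 0 \<le> \<tau> \<and> \<tau> \<le> (b - a) / 2 \<and> \<xi> - \<tau> \<in> {a..b} \<and> \<xi> + \<tau> \<in> {a..b} \<longrightarrow>
           \<bar>K (\<xi> + \<tau>) + K (\<xi> - \<tau>) - 2 * K \<xi>\<bar> \<le> C0 * \<tau> * Zg \<gamma> \<tau>"
  shows "\<exists>K'. continuous_on {a..b} K' \<and>
           (\<forall>x\<in>{a..b}. (K has_real_derivative K' x) (at x within {a..b})) \<and>
           (\<exists>C>0. \<forall>\<xi>\<in>{a..b}. \<forall>\<eta>\<in>{a..b}. \<bar>K' \<xi> - K' \<eta>\<bar> \<le> C * Pg \<gamma> \<bar>\<xi> - \<eta>\<bar>)"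
proof -
  obtain C0 where "0 < C0" and second_difference:
    "\<forall>\<xi> \<tau>. 0 \<le> \<tau> \<and> \<tau> \<le> (b - a) / 2 \<and> \<xi> - \<tau> \<in> {a..b} \<and> \<xi> + \<tau> \<in> {a..b} \<longrightarrow>
       \<bar>K (\<xi> + \<tau>) + K (\<xi> - \<tau>) - 2 * K \<xi>\<bar> \<le> C0 * \<tau> * Zg \<gamma> \<tau>"
    using assms(5) by blast
  interpret zygmund_second_difference a b \<gamma> C0 K
  proof
    show "\<bar>K (\<xi> + \<tau>) + K (\<xi> - \<tau>) - 2 * K \<xi>\<bar> \<le> C0 * \<tau> * Zg \<gamma> \<tau>"
      if "0 \<le> \<tau>" "\<xi> - \<tau> \<in> {a..b}" "\<xi> + \<tau> \<in> {a..b}" for \<xi> \<tau>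
      using second_difference that by auto
  qed (use assms \<open>0 < C0\<close> in auto)
  have "\<forall>x\<in>{a..b}. \<exists>D. (K has_real_derivative D) (at x within {a..b})"
    using exists_derivative[OF \<open>a < b\<close>] by blast
  then obtain K' where K': "\<forall>x\<in>{a..b}. (K has_real_derivative K' x) (at x within {a..b})"
    by (metis bchoice)
  have modulus: "\<bar>K' \<xi> - K' \<eta>\<bar> \<le> C0 * Pg \<gamma> \<bar>\<xi> - \<eta>\<bar>"
    if "\<xi> \<in> {a..b}" "\<eta> \<in> {a..b}" for \<xi> \<eta>
    using derivative_modulus K' that by blast
  show ?thesis
    using continuous_on_Pg_modulus[OF \<open>1 < \<gamma>\<close> modulus] K' modulus \<open>0 < C0\<close> by blast
qed

end
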